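(* Let $a\in\mathbb{R}$ and $k\ge0$. Then $$(z-a)^3q_{2k+1}^{(\mathrm{pre})}(z)=(z-a)^2z^{2k+2}+a\frac{(2k+1)!!}{2^{k+2}f_k(a^2)}\mathcal L_{k+1}(z,a),$$ $$(z-a)^3q_{2k}^{(\mathrm{pre})}(z)=a(z-a)^2\frac{e_{k+1}(a^2)}{f_k(a^2)}z^{2k+2}+\frac{(2k+3)!!}{2^{k+3}f_k(a^2)}\mathcal L_{k+2}(z,a)-a^2\frac{(2k+1)!!}{2^{k+2}f_k(a^2)}\mathcal L_{k+1}(z,a),$$ where $$\mathcal L_m(z,a)=(2(z-a)^2-1)\varkappa_m^{(\mathrm g)}(z,a)+2(z-a)e_{2m-1}(2za)-(z-a)\frac{2^{m+1}z^{2m}}{(2m-1)!!}e_{m-1}(a^2).$$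
   Context: $e_k(x)=\sum_{j=0}^kx^j/j!$, $f_k(x)=(k+1)e_k(x)-xe_{k-1}(x)$ (with $e_{-1}\equiv0$). $\varkappa_m^{(\mathrm g)}(z,w)=\sqrt2\sum_{n=0}^{m-1}\sum_{\ell=0}^{n}\Big(\frac{(\sqrt2z)^{2n+1}}{(2n+1)!!}\frac{(\sqrt2w)^{2\ell}}{(2\ell)!!}-\frac{(\sqrt2w)^{2n+1}}{(2n+1)!!}\frac{(\sqrt2z)^{2\ell}}{(2\ell)!!}\Big)$. The polynomials are $q_{2k}^{(\mathrm{pre})}(z)=\sum_{j=0}^{2k}\alpha_{2k,j}z^j$, $q_{2k+1}^{(\mathrm{pre})}(z)=\sum_{j=0}^{2k+1}\beta_{2k+1,j}z^j$ with, writing $c_{j,k}=\frac{2^jf_j(a^2)}{2^kf_k(a^2)}$: $\alpha_{2k,2j}=c_{j,k}\big[\sum_{\ell=j}^k(\ell+1-j)\frac{(2k+3)!!}{(2\ell+3)!!}(2a^2)^{\ell-j}-\sum_{\ell=j}^k(\ell-j)\frac{(2k+1)!!}{(2\ell+1)!!}(2a^2)^{\ell-j}\big]$ ($0\le j\le k$); $\alpha_{2k,2j+1}=2a\,c_{j,k}\big[\sum_{\ell=j}^{k-1}(\ell+1-j)\frac{(2k+3)!!}{(2\ell+5)!!}(2a^2)^{\ell-j}-\sum_{\ell=j}^{k-1}(\ell-j)\frac{(2k+1)!!}{(2\ell+3)!!}(2a^2)^{\ell-j}\big]$ ($0\le j\le k-1$); $\beta_{2k+1,2j}=a\,c_{j,k}\big[\frac{2j+1}{2k+3}(2a^2)^{k-j}+2\sum_{\ell=j}^k(\ell+1-j)\frac{(2k+1)!!}{(2\ell+3)!!}(2a^2)^{\ell-j}\big]$;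 $\beta_{2k+1,2j+1}=c_{j,k}\big[\frac{2j+3}{2k+3}(2a^2)^{k-j}+2\sum_{\ell=j}^k(\ell-j)\frac{(2k+1)!!}{(2\ell+3)!!}(2a^2)^{\ell-j}\big]$ ($0\le j\le k$). *)

theory Defs
  imports Complex_Main
begin

fun dfact :: "nat \<Rightarrow> nat" where
  "dfact 0 = 1"
| "dfact (Suc 0) = 1"
| "dfact (Suc (Suc n)) = Suc (Suc n) * dfact n"

definition ek :: "nat \<Rightarrow> 'a::field_char_0 \<Rightarrow> 'a" where
  "ek k x = (\<Sum>j\<le>k. x ^ j / fact j)"

definition fk :: "nat \<Rightarrow> 'a::field_char_0 \<Rightarrow> 'a" where
  "fk k x = of_nat (k + 1) * ek k x - (if k = 0 then 0 else x * ek (k - 1) x)"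

definition kappa_g :: "nat \<Rightarrow> complex \<Rightarrow> complex \<Rightarrow> complex" where
  "kappa_g m z w = of_real (sqrt 2) *
     (\<Sum>n<m. \<Sum>l\<le>n.
        (of_real (sqrt 2) * z) ^ (2*n+1) / of_nat (dfact (2*n+1))
          * (of_real (sqrt 2) * w) ^ (2*l) / of_nat (dfact (2*l))
      - (of_real (sqrt 2) * w) ^ (2*n+1) / of_nat (dfact (2*n+1))
          * (of_real (sqrt 2) * z) ^ (2*l) / of_nat (dfact (2*l)))"

definition cjk :: "real \<Rightarrow> nat \<Rightarrow> nat \<Rightarrow> real" where
  "cjk a j k = (2 ^ j * fk j (a^2)) / (2 ^ k * fk k (a^2))"

definition alpha_even :: "real \<Rightarrow> nat \<Rightarrow> nat \<Rightarrow> real" where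
  "alpha_even a k j = cjk a j k *
     ((\<Sum>l=j..k. real (l + 1 - j) * real (dfact (2*k+3)) / real (dfact (2*l+3)) * (2*a^2) ^ (l - j))
    - (\<Sum>l=j..k. real (l - j) * real (dfact (2*k+1)) / real (dfact (2*l+1)) * (2*a^2) ^ (l - j)))"

definition alpha_odd :: "real \<Rightarrow> nat \<Rightarrow> nat \<Rightarrow> real" where
  "alpha_odd a k j = 2 * a * cjk a j k *
     ((\<Sum>l\<in>{j..<k}. real (l + 1 - j) * real (dfact (2*k+3)) / real (dfact (2*l+5)) * (2*a^2) ^ (l - j))
    - (\<Sum>l\<in>{j..<k}. real (l - j) * real (dfact (2*k+1)) / real (dfact (2*l+3)) * (2*a^2) ^ (l - j)))"

definition beta_even :: "real \<Rightarrow> nat \<Rightarrow> nat \<Rightarrow> real" where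
  "beta_even a k j = a * cjk a j k *
     (real (2*j+1) / real (2*k+3) * (2*a^2) ^ (k - j)
    + 2 * (\<Sum>l=j..k. real (l + 1 - j) * real (dfact (2*k+1)) / real (dfact (2*l+3)) * (2*a^2) ^ (l - j)))"

definition beta_odd :: "real \<Rightarrow> nat \<Rightarrow> nat \<Rightarrow> real" where
  "beta_odd a k j = cjk a j k *
     (real (2*j+3) / real (2*k+3) * (2*a^2) ^ (k - j)
    + 2 * (\<Sum>l=j..k. real (l - j) * real (dfact (2*k+1)) / real (dfact (2*l+3)) * (2*a^2) ^ (l - j)))"

definition q_pre_even :: "real \<Rightarrow> nat \<Rightarrow> complex \<Rightarrow> complex" where
  "q_pre_even a k z = (\<Sum>i\<le>2*k.
     of_real (if even i then alpha_even a k (i div 2) else alpha_odd a k (i div 2)) * z ^ i)"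

definition q_pre_odd :: "real \<Rightarrow> nat \<Rightarrow> complex \<Rightarrow> complex" where
  "q_pre_odd a k z = (\<Sum>i\<le>2*k+1.
     of_real (if even i then beta_even a k (i div 2) else beta_odd a k (i div 2)) * z ^ i)"

text \<open>L_m(z,a), used for m \<ge> 1.\<close>
definition Lm :: "nat \<Rightarrow> complex \<Rightarrow> real \<Rightarrow> complex" where
  "Lm m z a = (2 * (z - of_real a)^2 - 1) * kappa_g m z (of_real a)
     + 2 * (z - of_real a) * ek (2*m - 1) (2 * z * of_real a)
     - (z - of_real a) * (2 ^ (m+1) * z ^ (2*m) / of_nat (dfact (2*m - 1))) * of_real (ek (m - 1) (a^2))"

end

(*
  Scaling q_{2k+1} by c_k = 2^k f_k(a^2) / (2k+1)!! clears the denominators of its coefficients,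
  and c_{k+1} q_{2k+3} - c_k q_{2k+1} = 2^k / (2k+3)!! * (S_k + 2 f_{k+1}(a^2) (a z^{2k+2} + z^{2k+3}))
  for an explicit polynomial S_k. A second induction on k computes (z-a)^3 S_k in closed form,
  in terms of L_{k+2} - L_{k+1}, and the odd identity follows by induction on k.

  The coefficients satisfy a f_k alpha_{2k,i} = f_{k+1} beta_{2k+3,i} - a^2 f_k beta_{2k+1,i}, so for
  a <> 0 the even identity is a linear combination of the odd identities for k and k+1. Both sides
  of it are continuous in a, which covers a = 0.
*)
theory Submission
  imports Defs
begin

section \<open>Double factorials and truncated exponentials\<close>

lemma dfact_pos [simp]: "0 < dfact n"
  by (induction n rule: dfact.induct) auto

lemma dfact_neq_0 [simp]: "dfact n \<noteq> 0"
  using dfact_pos [of n] by linarith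

lemma dfact_odd_Suc: "dfact (2*n+3) = (2*n+3) * dfact (2*n+1)"
  by (simp add: numeral_eq_Suc)

lemma of_nat_dfact_odd_Suc:
  "(of_nat (dfact (2*n+3)) :: 'a::semiring_1) = (2 * of_nat n + 3) * of_nat (dfact (2*n+1))"
  by (simp add: dfact_odd_Suc)

lemma dfact_Suc_odd_real: "real (dfact (2*Suc k+3)) = (2*real k + 5) * real (dfact (2*k+3))"
proof -
  have idx: "2*Suc k+1 = 2*k+3"
    by simp
  show ?thesis
    using of_nat_dfact_odd_Suc [of "Suc k", where 'a=real, unfolded idx] by simp
qed

lemma dfact_even: "dfact (2*l) = 2^l * fact l"
  by (induction l) (simp_all add: numeral_eq_Suc algebra_simps)

lemma fact_Suc_dfact: "fact (Suc n) = dfact (Suc n) * dfact n"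
  by (induction n) (simp_all add: algebra_simps)

lemma fact_even_dfact:
  "(fact (2*k+2) :: 'a::semiring_char_0) = 2^(k+1) * fact (k+1) * of_nat (dfact (2*k+1))"
proof -
  have "fact (2*k+2) = dfact (2*(k+1)) * dfact (2*k+1)"
    using fact_Suc_dfact [of "2*k+1"] by simp
  then have "fact (2*k+2) = 2^(k+1) * fact (k+1) * dfact (2*k+1)"
    by (simp only: dfact_even)
  then have "(of_nat (fact (2*k+2)) :: 'a) = of_nat (2^(k+1) * fact (k+1) * dfact (2*k+1))"
    by (rule arg_cong)
  then show ?thesis
    by (simp only: of_nat_mult of_nat_power of_nat_fact of_nat_numeral)
qed

lemma of_nat_add_1_neq_0 [simp]: "(of_nat k + 1 :: 'a::semiring_char_0) \<noteq> 0"
  by (metis of_nat_Suc add.commute of_nat_eq_0_iff nat.distinct(1))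

lemma ek_0 [simp]: "ek 0 x = 1"
  by (simp add: ek_def)

lemma ek_Suc: "ek (Suc n) x = ek n x + x^Suc n / fact (Suc n)"
  by (simp add: ek_def)

lemma power_div_fact_Suc:
  "(x::'a::field_char_0)^Suc n / fact (Suc n) = x * (x^n / fact n) / (of_nat n + 1)"
  by (simp add: field_simps)

lemma power_div_fact_odd:
  "x^(2*k+3) / fact (2*k+3) = x^(2*k+2) / fact (2*k+2) * x / (2 * of_nat k + 3 :: 'a::field_char_0)"
proof -
  have "(fact (2*k+3) :: 'a) = (2 * of_nat k + 3) * fact (2*k+2)"
    by (simp add: numeral_eq_Suc algebra_simps)
  moreover have "x^(2*k+3) = x^(2*k+2) * x"
    by (simp add: numeral_eq_Suc)
  ultimately show ?thesis
    by (simp add: divide_simps)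
qed

lemma fk_0 [simp]: "fk 0 x = 1"
  by (simp add: fk_def)

lemma fk_altdef: "fk k x = (of_nat k + 1 - x) * ek k x + x * (x^k / fact k)"
proof (cases k)
  case (Suc m)
  define u where "u = x^Suc m / fact (Suc m)"
  have "ek (Suc m) x = ek m x + u"
    by (simp add: ek_Suc u_def)
  then show ?thesis
    unfolding Suc fk_def u_def [symmetric] by (simp add: algebra_simps)
qed (simp add: fk_def)

lemma fk_Suc: "fk (Suc k) x = fk k x + ek (Suc k) x"
proof -
  define u where "u = x^Suc k / fact (Suc k)"
  define w where "w = x * (x^k / fact k)"
  have key: "(of_nat k + 1) * u = w"
    unfolding u_def w_def power_div_fact_Suc by simp
  have "ek (Suc k) x = ek k x + u"
    by (simp add: ek_Suc u_def)
  then show ?thesis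
    unfolding fk_altdef [of "Suc k"] fk_altdef [of k] u_def [symmetric] w_def [symmetric]
    by (subst key [symmetric]) (simp add: algebra_simps)
qed

lemma ek_nonneg: "(x::real) \<ge> 0 \<Longrightarrow> ek n x \<ge> 0"
  unfolding ek_def by (intro sum_nonneg) auto

lemma fk_pos: "(x::real) \<ge> 0 \<Longrightarrow> fk k x > 0"
  by (induction k) (simp_all add: fk_Suc add_pos_nonneg ek_nonneg)

lemma fk_power2_neq_0 [simp]: "fk k ((a::real)^2) \<noteq> 0"
  using fk_pos [of "a^2" k] by simp

lemma of_real_ek: "of_real (ek n x) = ek n (of_real x :: 'a::{real_field,field_char_0})"
  unfolding ek_def by (simp add: of_real_sum)

lemma of_real_fk: "of_real (fk n x) = fk n (of_real x :: 'a::{real_field,field_char_0})"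
  unfolding fk_def by (simp add: of_real_ek)

lemma continuous_ek [continuous_intros]:
  fixes f :: "'a::t2_space \<Rightarrow> 'b::{real_normed_field,field_char_0}"
  shows "continuous F f \<Longrightarrow> continuous F (\<lambda>x. ek n (f x))"
  unfolding ek_def divide_inverse by (intro continuous_intros)

lemma continuous_fk [continuous_intros]:
  fixes f :: "'a::t2_space \<Rightarrow> 'b::{real_normed_field,field_char_0}"
  shows "continuous F f \<Longrightarrow> continuous F (\<lambda>x. fk n (f x))"
  unfolding fk_altdef divide_inverse by (intro continuous_intros)

lemma kappa_g_0 [simp]: "kappa_g 0 z w = 0"
  by (simp add: kappa_g_def)

lemma kappa_g_Suc:
  "kappa_g (Suc m) z w = kappa_g m z w
     + 2^(m+1) / of_nat (dfact (2*m+1)) * (z^(2*m+1) * ek m (w^2) - w^(2*m+1) * ek m (z^2))"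
proof -
  let ?s = "of_real (sqrt 2) :: complex"
  have s2: "?s^2 = 2"
    by (metis of_real_numeral of_real_power real_sqrt_pow2 zero_le_numeral)
  have summand: "?s * ((?s * x) ^ (2*m+1) / of_nat (dfact (2*m+1)) * (?s * y) ^ (2*l) / of_nat (dfact (2*l)))
      = 2^(m+1) / of_nat (dfact (2*m+1)) * x^(2*m+1) * ((y^2)^l / fact l)" for x y :: complex and l
  proof -
    have x: "(?s * x) ^ (2*m+1) = ?s * 2^m * x^(2*m+1)"
      by (simp add: power_mult_distrib power_add power_mult s2)
    have y: "(?s * y) ^ (2*l) = 2^l * (y^2)^l"
      by (simp add: power_mult_distrib power_mult s2)
    have d: "(of_nat (dfact (2*l)) :: complex) = 2^l * fact l"
      by (simp add: dfact_even)
    have s: "?s * ?s = 2"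
      using s2 by (simp add: power2_eq_square)
    show ?thesis
      unfolding x y d by (simp add: field_simps s)
  qed
  have "?s * (\<Sum>l\<le>m. (?s * z) ^ (2*m+1) / of_nat (dfact (2*m+1)) * (?s * w) ^ (2*l) / of_nat (dfact (2*l))
      - (?s * w) ^ (2*m+1) / of_nat (dfact (2*m+1)) * (?s * z) ^ (2*l) / of_nat (dfact (2*l)))
    = 2^(m+1) / of_nat (dfact (2*m+1)) * (z^(2*m+1) * ek m (w^2) - w^(2*m+1) * ek m (z^2))"
    unfolding sum_distrib_left right_diff_distrib summand ek_def sum_subtractf
    by (simp add: mult.assoc)
  then show ?thesis
    unfolding kappa_g_def sum.lessThan_Suc distrib_left by simp
qed

section \<open>A closed form for the odd increment\<close>

definition Lm_step :: "nat \<Rightarrow> complex \<Rightarrow> complex \<Rightarrow> complex" where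
  "Lm_step n z A =
     (2*(z-A)^2-1) * (2^(n+2) / of_nat (dfact (2*n+3))) * (z^(2*n+3) * ek (n+1) (A^2) - A^(2*n+3) * ek (n+1) (z^2))
     + 2*(z-A) * ((2*z*A)^(2*n+2) / fact (2*n+2) + (2*z*A)^(2*n+3) / fact (2*n+3))
     - (z-A) * (2^(n+3) * z^(2*n+4) / of_nat (dfact (2*n+3)) * ek (n+1) (A^2)
                - 2^(n+2) * z^(2*n+2) / of_nat (dfact (2*n+1)) * ek n (A^2))"

lemma Lm_Suc_Suc: "Lm (Suc (Suc n)) z a = Lm (Suc n) z a + Lm_step n z (of_real a)"
proof -
  have kappa: "kappa_g (Suc (Suc n)) z (of_real a) = kappa_g (Suc n) z (of_real a)
      + 2^(n+2) / of_nat (dfact (2*n+3)) * (z^(2*n+3) * ek (n+1) ((of_real a)^2) - (of_real a)^(2*n+3) * ek (n+1) (z^2))"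
    using kappa_g_Suc [of "Suc n" z "of_real a"] by (simp add: numeral_eq_Suc)
  have ek: "ek (2*n+3) w = ek (2*n+1) w + w^(2*n+2)/fact (2*n+2) + w^(2*n+3)/fact(2*n+3)" for w :: complex
    using ek_Suc [of "2*n+1" w] ek_Suc [of "2*n+2" w] by (simp add: numeral_eq_Suc)
  have idx: "2*n+4 - 1 = 2*n+3" "2*n+2 - 1 = 2*n+1" "Suc (Suc n) - 1 = n+1" "Suc n - 1 = n"
    "Suc (Suc n) + 1 = n+3" "2 * Suc (Suc n) = 2*n+4" "Suc n + 1 = n+2" "2 * Suc n = 2*n+2"
    by simp_all
  show ?thesis
    unfolding Lm_def kappa idx unfolding ek Lm_step_def
    by (simp add: of_real_ek algebra_simps del: fact_Suc power_Suc)
qed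

definition step_sum :: "nat \<Rightarrow> complex \<Rightarrow> complex \<Rightarrow> complex" where
  "step_sum k z A = (\<Sum>j\<le>k. (A^2)^(k-j) * fk j (A^2)
     * (A*(2*A^2 - 2*of_nat j - 1)*z^(2*j) + (2*A^2 - 2*of_nat j - 3)*z^(2*j+1)))"

lemma step_sum_Suc:
  "step_sum (Suc k) z A = A^2 * step_sum k z A + fk (Suc k) (A^2)
     * (A*(2*A^2 - 2*of_nat (Suc k) - 1)*z^(2*Suc k) + (2*A^2 - 2*of_nat (Suc k) - 3)*z^(2*Suc k+1))"
proof -
  define T where "T j = fk j (A^2) * (A*(2*A^2 - 2*of_nat j - 1)*z^(2*j) + (2*A^2 - 2*of_nat j - 3)*z^(2*j+1))" for j
  have S: "step_sum n z A = (\<Sum>j\<le>n. (A^2)^(n-j) * T j)" for n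
    unfolding step_sum_def T_def by (simp only: mult.assoc)
  have "(\<Sum>j\<le>k. (A^2)^(Suc k-j) * T j) = A^2 * (\<Sum>j\<le>k. (A^2)^(k-j) * T j)"
    unfolding sum_distrib_left by (rule sum.cong) (auto simp: Suc_diff_le)
  then show ?thesis
    unfolding S sum.atMost_Suc T_def by simp
qed

definition step_closed :: "nat \<Rightarrow> complex \<Rightarrow> complex \<Rightarrow> complex" where
  "step_closed k z A = (z-A)^2*(2*z^(2*k+4)*fk (k+1) (A^2) - (2*of_nat k+3)*z^(2*k+2)*fk k (A^2))
     + (of_nat (dfact (2*k+3)) / 2^(k+2)) * A * Lm_step k z A
     - 2*(z-A)^3*fk (k+1) (A^2)*(A*z^(2*k+2) + z^(2*k+3))"

text \<open>\<open>step_closed\<close> with its \<open>k\<close>-dependent quantities turned into variables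
  (see \<open>step_closed_eq_template\<close>), so that the induction step in \<open>k\<close> becomes an identity
  of rational functions.\<close>

definition step_template :: "'a::field \<Rightarrow> 'a \<Rightarrow> 'a \<Rightarrow> 'a \<Rightarrow> 'a \<Rightarrow> 'a \<Rightarrow> 'a \<Rightarrow> 'a \<Rightarrow> 'a \<Rightarrow> 'a \<Rightarrow> 'a" where
  "step_template c A z Z p E E1 ez F0 F1 =
     (z-A)^2*(2*z^4*Z*F1 - (2*c+3)*z^2*Z*F0) + A*(2*(z-A)^2-1)*(z^3*Z*E1 - A^3*p*ez)
     + A^3*(z-A)*(2*c+3+2*z*A)*z^2*Z*p/(c+1) - A*(z-A)*(2*z^4*Z*E1 - (2*c+3)*z^2*Z*E)
     - 2*(z-A)^3*F1*(A*z^2*Z + z^3*Z)"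

lemma step_template_Suc:
  fixes c A z Z p E ez :: "'a::field"
  assumes nz: "c+1 \<noteq> 0" "c+2 \<noteq> 0"
    and E1: "E1 = E + A^2*p/(c+1)" and E2: "E2 = E1 + A^4*p/((c+1)*(c+2))"
    and ez2: "ez2 = (c+1)*ez + z^4*Z/(c+2)"
    and F0: "F0 = (c+1-A^2)*E + A^2*p" and F1: "F1 = F0 + E1" and F2: "F2 = F1 + E2"
  shows "step_template (c+1) A z (z^2*Z) (A^2*p/(c+1)) E1 E2 ez2 F1 F2
    = A^2 * step_template c A z Z p E E1 ez F0 F1
      + (z-A)^3*F1*(A*(2*A^2-2*c-3)*z^2*Z + (2*A^2-2*c-5)*z^3*Z)"
proof -
  define u where "u = c + 1"
  define v where "v = c + 2"
  have uv: "u + 1 = v" and c: "c = u - 1"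
    unfolding u_def v_def by simp_all
  have "u \<noteq> 0" "v \<noteq> 0"
    using nz unfolding u_def v_def .
  then show ?thesis
    unfolding step_template_def F2 F1 E2 F0 E1 ez2 u_def [symmetric] v_def [symmetric] uv
    unfolding c
    apply (simp add: field_simps)
    using uv [symmetric] by algebra
qed

lemma step_closed_eq_template:
  "step_closed k z A = step_template (of_nat k) A z (z^(2*k)) ((A^2)^k / fact k) (ek k (A^2)) (ek (k+1) (A^2))
     (fact k * ek (k+1) (z^2)) (fk k (A^2)) (fk (k+1) (A^2))"
proof -
  define Q :: complex where "Q = 2^k"
  define D :: complex where "D = of_nat (dfact (2*k+1))"
  define fc :: complex where "fc = fact k"
  define c :: complex where "c = of_nat k"
  define c1 where "c1 = c + 1"
  define d3 where "d3 = 2*c+3"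
  define Z where "Z = z^(2*k)"
  define P where "P = (A^2)^k"
  have nz: "Q \<noteq> 0" "D \<noteq> 0" "fc \<noteq> 0" "c1 \<noteq> 0" "d3 \<noteq> 0"
  proof -
    show "Q \<noteq> 0" "D \<noteq> 0" "fc \<noteq> 0" "c1 \<noteq> 0"
      unfolding Q_def D_def fc_def c1_def c_def by simp_all
    have "d3 = of_nat (2*k+3)"
      unfolding d3_def c_def by simp
    then show "d3 \<noteq> 0"
      by (simp only: of_nat_eq_0_iff)
  qed
  have w1: "(2*z*A)^(2*k+2) / fact (2*k+2) = 2*Q*z^2*Z*A^2*P/(c1*fc*D)"
  proof -
    have "(2*z*A)^(2*k+2) = 2^(2*k)*2^2 * (z^(2*k)*z^2) * (A^(2*k)*A^2)"
      by (simp only: power_mult_distrib power_add mult_ac)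
    also have "\<dots> = 4 * Q^2 * z^2*Z*A^2*P"
      unfolding Q_def Z_def P_def by (simp add: power_mult [symmetric] mult.commute)
    finally have h1: "(2*z*A)^(2*k+2) = 4 * Q^2 * z^2*Z*A^2*P" .
    have h2: "(fact (2*k+2)::complex) = 2*Q*(c1*fc)*D"
      unfolding fact_even_dfact Q_def c1_def c_def fc_def D_def by (simp add: algebra_simps)
    show ?thesis
      unfolding h1 h2 using nz by (simp add: field_simps power2_eq_square)
  qed
  have w2: "(2*z*A)^(2*k+3) / fact (2*k+3) = (2*z*A)^(2*k+2) / fact (2*k+2) * (2*z*A) / d3"
    unfolding d3_def c_def by (rule power_div_fact_odd)
  have p: "z^(2*k+4) = z^4*Z" "z^(2*k+2) = z^2*Z" "z^(2*k+3) = z^3*Z" "A^(2*k+3) = A^3*P"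
     "(2::complex)^(k+2) = 4*Q" "(2::complex)^(k+3) = 8*Q"
    unfolding Z_def P_def Q_def by (simp_all add: power_add power_mult power2_eq_square)
  show ?thesis
    unfolding step_closed_def Lm_step_def step_template_def of_nat_dfact_odd_Suc w2 unfolding w1 p
    unfolding Q_def [symmetric] D_def [symmetric] fc_def [symmetric] c_def [symmetric]
      Z_def [symmetric] P_def [symmetric] c1_def [symmetric] d3_def [symmetric]
    using nz apply (simp add: field_simps)
    unfolding c1_def d3_def by algebra
qed

lemma step_closed_Suc:
  "step_closed (Suc k) z A = A^2 * step_closed k z A + (z-A)^3 * fk (Suc k) (A^2)
     * (A*(2*A^2 - 2*of_nat (Suc k) - 1)*z^(2*Suc k) + (2*A^2 - 2*of_nat (Suc k) - 3)*z^(2*Suc k+1))"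
proof -
  define c :: complex where "c = of_nat k"
  define p where "p = (A^2)^k / fact k"
  define Z where "Z = z^(2*k)"
  have nz: "c+1 \<noteq> 0" "c+2 \<noteq> 0"
    unfolding c_def using of_nat_add_1_neq_0 [of "Suc k", where 'a=complex]
    by (simp, simp add: add.commute)
  have c1: "(of_nat (Suc k) :: complex) = c+1" and c2: "(of_nat (Suc k) + 1 :: complex) = c+2"
    unfolding c_def by simp_all
  have pf1: "(A^2)^Suc k / fact (Suc k) = A^2*p/(c+1)"
    unfolding power_div_fact_Suc p_def c_def by simp
  have pf2: "(A^2)^Suc (Suc k) / fact (Suc (Suc k)) = A^4*p/((c+1)*(c+2))"
    unfolding power_div_fact_Suc [of "A^2" "Suc k"] pf1 c2 using nz
    by (simp add: field_simps)
  have zf: "fact (Suc k) * ((z^2)^Suc (Suc k) / fact (Suc (Suc k))) = z^4*Z/(c+2)"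
  proof -
    have q1: "(z^2)^Suc (Suc k) / fact (Suc (Suc k)) = z^2 * (z^2 * ((z^2)^k/fact k) / (c+1)) / (c+2)"
      unfolding power_div_fact_Suc [of "z^2" "Suc k"] power_div_fact_Suc [of "z^2" k] c2 c_def ..
    have q2: "(fact (Suc k)::complex) = (c+1) * fact k"
      unfolding c_def by simp
    have cancel: "(a*f) * (u*(u*(Y/f)/a)/b) = u^2*Y/b" if "a \<noteq> 0" "f \<noteq> 0" for a f b u Y :: complex
      using that by (simp add: field_simps power2_eq_square)
    have "(z^2)^k = Z" "(z^2)^2 = z^4"
      unfolding Z_def by (simp_all add: power_mult [symmetric])
    then show ?thesis
      unfolding q1 q2 cancel [OF nz(1) fact_nonzero] by simp
  qed
  have E1: "ek (Suc k) (A^2) = ek k (A^2) + A^2*p/(c+1)"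
    using ek_Suc [of k "A^2"] pf1 by simp
  have E2: "ek (Suc k + 1) (A^2) = ek (Suc k) (A^2) + A^4*p/((c+1)*(c+2))"
    using ek_Suc [of "Suc k" "A^2"] pf2 by simp
  have ez2: "fact (Suc k) * ek (Suc k + 1) (z^2) = (c+1)*(fact k * ek (k+1) (z^2)) + z^4*Z/(c+2)"
    using ek_Suc [of "Suc k" "z^2"] zf unfolding c_def by (simp add: algebra_simps)
  have F0: "fk k (A^2) = (c+1-A^2)*ek k (A^2) + A^2*p"
    unfolding fk_altdef [of k "A^2"] c_def p_def ..
  have F2: "fk (Suc k + 1) (A^2) = fk (Suc k) (A^2) + ek (Suc k + 1) (A^2)"
    using fk_Suc [of "Suc k" "A^2"] by simp
  have "step_closed (Suc k) z A = step_template (c+1) A z (z^2*Z) (A^2*p/(c+1)) (ek (Suc k) (A^2)) (ek (Suc k + 1) (A^2))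
     (fact (Suc k) * ek (Suc k + 1) (z^2)) (fk (Suc k) (A^2)) (fk (Suc k + 1) (A^2))"
    unfolding step_closed_eq_template c1 pf1
    unfolding Z_def by (simp add: power_add power2_eq_square mult.assoc)
  also have "\<dots> = A^2 * step_template c A z Z p (ek k (A^2)) (ek (Suc k) (A^2)) (fact k * ek (k+1) (z^2)) (fk k (A^2)) (fk (Suc k) (A^2))
      + (z-A)^3*fk (Suc k) (A^2)*(A*(2*A^2-2*c-3)*z^2*Z + (2*A^2-2*c-5)*z^3*Z)"
    by (rule step_template_Suc [OF nz E1 E2 ez2 F0 fk_Suc [of k "A^2"] F2])
  also have "step_template c A z Z p (ek k (A^2)) (ek (Suc k) (A^2)) (fact k * ek (k+1) (z^2)) (fk k (A^2)) (fk (Suc k) (A^2))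
      = step_closed k z A"
    unfolding step_closed_eq_template c_def Z_def p_def by simp
  finally show ?thesis
    unfolding c1 Z_def by (simp add: algebra_simps power_add power2_eq_square power3_eq_cube)
qed

lemma cube_mult_step_sum: "(z-A)^3 * step_sum k z A = step_closed k z A"
proof (induction k)
  case 0
  show ?case
    unfolding step_closed_eq_template step_template_def step_sum_def
    by (simp add: fk_Suc ek_Suc) algebra
next
  case (Suc k)
  then show ?case
    unfolding step_sum_Suc step_closed_Suc by (simp add: algebra_simps)
qed

definition dfact_sum :: "nat \<Rightarrow> nat \<Rightarrow> real \<Rightarrow> nat \<Rightarrow> nat set \<Rightarrow> real" where
  "dfact_sum c s a j L = (\<Sum>l\<in>L. real (l + c - j) * (2*a^2)^(l-j) / real (dfact (2*l+s)))"

lemma dfact_sum_singleton: "dfact_sum c s a j {j..j} = real c / real (dfact (2*j+s))"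
  by (simp add: dfact_sum_def)

lemma dfact_sum_atLeastAtMost:
  assumes "j \<le> k"
  shows "dfact_sum c s a j {j..k} = dfact_sum c s a j {j..<k} + real (k + c - j) * (2*a^2)^(k-j) / real (dfact (2*k+s))"
proof -
  have "{j..k} = insert k {j..<k}"
    using assms by auto
  then show ?thesis
    by (simp add: dfact_sum_def)
qed

lemma dfact_sum_telescope:
  assumes "j \<le> k"
  shows "2*a^2 * dfact_sum 1 3 a j {j..k} - dfact_sum 0 1 a j {j..k}
    = real (k+1-j) * (2*a^2)^(k+1-j) / real (dfact (2*k+3))"
  using assms
proof (induction k rule: dec_induct)
  case base
  show ?case
    by (simp add: dfact_sum_def)
next
  case (step k)
  define t1 where "t1 = real (Suc k + 1 - j) * (2*a^2)^(Suc k - j) / real (dfact (2*Suc k+3))"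
  define t2 where "t2 = real (Suc k - j) * (2*a^2)^(Suc k - j) / real (dfact (2*Suc k+1))"
  have idx: "Suc k + 1 - j = Suc (Suc k - j)" "Suc k - j = Suc (k - j)" "k + 1 - j = Suc (k - j)"
      "2*Suc k+1 = 2*k+3"
    using step.hyps by auto
  have "2*a^2 * dfact_sum 1 3 a j {j..Suc k} - dfact_sum 0 1 a j {j..Suc k}
      = (2*a^2 * dfact_sum 1 3 a j {j..k} - dfact_sum 0 1 a j {j..k}) + 2*a^2 * t1 - t2"
    using step.hyps unfolding t1_def t2_def by (simp add: dfact_sum_def algebra_simps)
  also have "\<dots> = 2*a^2 * t1"
    unfolding step.IH t2_def idx by simp
  also have "\<dots> = real (Suc k + 1 - j) * (2*a^2)^(Suc k + 1 - j) / real (dfact (2*Suc k+3))"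
    unfolding t1_def idx by simp
  finally show ?case .
qed

lemma dfact_sum_index_shift:
  assumes "j \<le> k"
  shows "2*a^2 * dfact_sum 1 5 a j {j..<k} = dfact_sum 0 3 a j {j..k}"
  using assms
proof (induction k rule: dec_induct)
  case base
  show ?case
    by (simp add: dfact_sum_def)
next
  case (step k)
  have idx: "Suc k - j = Suc (k - j)" "k + 1 - j = Suc (k - j)" "2*Suc k+3 = 2*k+5"
    using step.hyps by auto
  have sums: "dfact_sum 1 5 a j {j..<Suc k} = dfact_sum 1 5 a j {j..<k} + real (k + 1 - j) * (2*a^2)^(k - j) / real (dfact (2*k+5))"
       "dfact_sum 0 3 a j {j..Suc k} = dfact_sum 0 3 a j {j..k} + real (Suc k - j) * (2*a^2)^(Suc k - j) / real (dfact (2*Suc k+3))"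
    using step.hyps by (simp_all add: dfact_sum_def)
  show ?case
    unfolding sums distrib_left step.IH idx by simp
qed

lemma beta_even_eq:
  "beta_even a k j = a * cjk a j k * (real (2*j+1) / real (2*k+3) * (2*a^2)^(k-j)
     + 2 * real (dfact (2*k+1)) * dfact_sum 1 3 a j {j..k})"
  by (simp add: beta_even_def dfact_sum_def sum_distrib_left algebra_simps)

lemma beta_odd_eq:
  "beta_odd a k j = cjk a j k * (real (2*j+3) / real (2*k+3) * (2*a^2)^(k-j)
     + 2 * real (dfact (2*k+1)) * dfact_sum 0 3 a j {j..k})"
  by (simp add: beta_odd_def dfact_sum_def sum_distrib_left algebra_simps)

lemma alpha_even_eq:
  "alpha_even a k j = cjk a j k * (real (dfact (2*k+3)) * dfact_sum 1 3 a j {j..k}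
     - real (dfact (2*k+1)) * dfact_sum 0 1 a j {j..k})"
  by (simp add: alpha_even_def dfact_sum_def sum_distrib_left algebra_simps)

lemma alpha_odd_eq:
  "alpha_odd a k j = 2 * a * cjk a j k * (real (dfact (2*k+3)) * dfact_sum 1 5 a j {j..<k}
     - real (dfact (2*k+1)) * dfact_sum 0 3 a j {j..<k})"
  by (simp add: alpha_odd_def dfact_sum_def sum_distrib_left algebra_simps)

definition beta_even_scaled :: "real \<Rightarrow> nat \<Rightarrow> nat \<Rightarrow> real" where
  "beta_even_scaled a k j = a * 2^j * fk j (a^2)
     * (real (2*j+1) * (2*a^2)^(k-j) / real (dfact (2*k+3)) + 2 * dfact_sum 1 3 a j {j..k})"

definition beta_odd_scaled :: "real \<Rightarrow> nat \<Rightarrow> nat \<Rightarrow> real" where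
  "beta_odd_scaled a k j = 2^j * fk j (a^2)
     * (real (2*j+3) * (2*a^2)^(k-j) / real (dfact (2*k+3)) + 2 * dfact_sum 0 3 a j {j..k})"

lemma beta_even_scaled_Suc:
  assumes "j \<le> k"
  shows "beta_even_scaled a (Suc k) j = beta_even_scaled a k j
    + 2^k / real (dfact (2*k+3)) * ((a^2)^(k-j) * fk j (a^2) * (a * (2*a^2 - 2*real j - 1)))"
proof -
  obtain d where k: "k = j + d"
    using assms le_Suc_ex by blast
  define D where "D = real (dfact (2*k+3))"
  define e5 where "e5 = 2*real k + 5"
  have nz: "D \<noteq> 0" "e5 \<noteq> 0"
    unfolding D_def e5_def by simp_all
  have sum: "dfact_sum 1 3 a j {j..Suc k} = dfact_sum 1 3 a j {j..k}
      + real (Suc k + 1 - j) * (2*a^2)^(Suc k - j) / real (dfact (2*Suc k+3))"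
    using assms by (simp add: dfact_sum_def)
  show ?thesis
    unfolding beta_even_scaled_def sum dfact_Suc_odd_real D_def [symmetric] e5_def [symmetric]
    using nz unfolding k apply (simp add: power_add power_mult_distrib field_simps)
    unfolding e5_def k by (simp add: algebra_simps)
qed

lemma beta_odd_scaled_Suc:
  assumes "j \<le> k"
  shows "beta_odd_scaled a (Suc k) j = beta_odd_scaled a k j
    + 2^k / real (dfact (2*k+3)) * ((a^2)^(k-j) * fk j (a^2) * (2*a^2 - 2*real j - 3))"
proof -
  obtain d where k: "k = j + d"
    using assms le_Suc_ex by blast
  define D where "D = real (dfact (2*k+3))"
  define e5 where "e5 = 2*real k + 5"
  have nz: "D \<noteq> 0" "e5 \<noteq> 0"
    unfolding D_def e5_def by simp_all
  have sum: "dfact_sum 0 3 a j {j..Suc k} = dfact_sum 0 3 a j {j..k}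
      + real (Suc k - j) * (2*a^2)^(Suc k - j) / real (dfact (2*Suc k+3))"
    using assms by (simp add: dfact_sum_def)
  show ?thesis
    unfolding beta_odd_scaled_def sum dfact_Suc_odd_real D_def [symmetric] e5_def [symmetric]
    using nz unfolding k apply (simp add: power_add power_mult_distrib field_simps)
    unfolding e5_def k by (simp add: algebra_simps)
qed

lemma beta_even_scaled_diag: "beta_even_scaled a k k = a * 2^k * fk k (a^2) / real (dfact (2*k+1))"
proof -
  define d3 where "d3 = 2*real k + 3"
  have "d3 \<noteq> 0" "real (2*k+1) = d3 - 2"
    unfolding d3_def by simp_all
  then show ?thesis
    unfolding beta_even_scaled_def dfact_sum_singleton of_nat_dfact_odd_Suc d3_def [symmetric]
    by (simp add: field_simps)
qed

lemma beta_odd_scaled_diag: "beta_odd_scaled a k k = 2^k * fk k (a^2) / real (dfact (2*k+1))"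
proof -
  define d3 where "d3 = 2*real k + 3"
  have "d3 \<noteq> 0" "real (2*k+3) = d3"
    unfolding d3_def by simp_all
  then show ?thesis
    unfolding beta_odd_scaled_def dfact_sum_singleton of_nat_dfact_odd_Suc d3_def [symmetric]
    by (simp add: field_simps)
qed

lemma scaled_beta_even:
  "2^k * fk k (a^2) / real (dfact (2*k+1)) * beta_even a k j = beta_even_scaled a k j"
proof -
  define d3 where "d3 = 2*real k + 3"
  have "d3 \<noteq> 0" "real (2*k+3) = d3"
    unfolding d3_def by simp_all
  then show ?thesis
    unfolding beta_even_eq beta_even_scaled_def cjk_def of_nat_dfact_odd_Suc d3_def [symmetric]
    by (simp add: field_simps)
qed

lemma scaled_beta_odd:
  "2^k * fk k (a^2) / real (dfact (2*k+1)) * beta_odd a k j = beta_odd_scaled a k j"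
proof -
  define d3 where "d3 = 2*real k + 3"
  have "d3 \<noteq> 0" "real (2*k+3) = d3"
    unfolding d3_def by simp_all
  then show ?thesis
    unfolding beta_odd_eq beta_odd_scaled_def cjk_def of_nat_dfact_odd_Suc d3_def [symmetric]
    by (simp add: field_simps)
qed

lemma alpha_even_recurrence:
  assumes jk: "j \<le> k"
  shows "a * fk k (a^2) * alpha_even a k j
    = fk (Suc k) (a^2) * beta_even a (Suc k) j - a^2 * fk k (a^2) * beta_even a k j"
proof -
  define B where "B = (2*a^2)^(k-j)"
  define D where "D = real (dfact (2*k+1))"
  define d3 where "d3 = 2*real k + 3"
  define d5 where "d5 = 2*real k + 5"
  define T where "T = dfact_sum 1 3 a j {j..k}"
  have nz: "D \<noteq> 0" "d3 \<noteq> 0" "d5 \<noteq> 0" "fk (Suc k) (a^2) \<noteq> 0" "fk k (a^2) \<noteq> 0"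
    unfolding D_def d3_def d5_def by simp_all
  have D3: "real (dfact (2*k+3)) = d3 * D"
    unfolding d3_def D_def by (rule of_nat_dfact_odd_Suc)
  have D5: "real (dfact (2*Suc k+3)) = d5 * (d3 * D)"
    unfolding dfact_Suc_odd_real D3 d5_def ..
  have idx: "2*Suc k+1 = 2*k+3"
    by simp
  have pow: "(2*a^2)^(Suc k - j) = 2*a^2*B" "(2*a^2)^(k+1-j) = 2*a^2*B"
    unfolding B_def using jk by (simp_all add: Suc_diff_le)
  have r: "real (Suc k + 1 - j) = real k + 2 - real j" "real (k+1-j) = real k + 1 - real j"
     "real (2*j+1) = 2*real j + 1" "real (2*k+3) = d3" "real (2*Suc k+3) = d5"
    unfolding d3_def d5_def using jk by (simp_all add: of_nat_diff)
  have T_Suc: "dfact_sum 1 3 a j {j..Suc k} = T + real (Suc k + 1 - j) * (2*a^2)^(Suc k - j) / real (dfact (2*Suc k+3))"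
    using jk unfolding T_def by (simp add: dfact_sum_def)
  have R: "dfact_sum 0 1 a j {j..k} = 2*a^2*T - (real k + 1 - real j) * (2*a^2*B) / (d3*D)"
    using dfact_sum_telescope [OF jk, of a] unfolding T_def pow r D3 by simp
  show ?thesis
    unfolding alpha_even_eq beta_even_eq T_Suc idx D3 D5 pow r R T_def [symmetric]
      B_def [symmetric] D_def [symmetric] cjk_def
    using nz apply (simp add: field_simps)
    unfolding d3_def d5_def by (simp add: algebra_simps)
qed

lemma alpha_odd_recurrence:
  assumes jk: "j \<le> k"
  shows "a * fk k (a^2) * alpha_odd a k j
    = fk (Suc k) (a^2) * beta_odd a (Suc k) j - a^2 * fk k (a^2) * beta_odd a k j"
proof -
  define B where "B = (2*a^2)^(k-j)"
  define D where "D = real (dfact (2*k+1))"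
  define d3 where "d3 = 2*real k + 3"
  define d5 where "d5 = 2*real k + 5"
  define V where "V = dfact_sum 1 5 a j {j..<k}"
  have nz: "D \<noteq> 0" "d3 \<noteq> 0" "d5 \<noteq> 0" "fk (Suc k) (a^2) \<noteq> 0" "fk k (a^2) \<noteq> 0"
    unfolding D_def d3_def d5_def by simp_all
  have D3: "real (dfact (2*k+3)) = d3 * D"
    unfolding d3_def D_def by (rule of_nat_dfact_odd_Suc)
  have D5: "real (dfact (2*Suc k+3)) = d5 * (d3 * D)"
    unfolding dfact_Suc_odd_real D3 d5_def ..
  have idx: "2*Suc k+1 = 2*k+3"
    by simp
  have pow: "(2*a^2)^(Suc k - j) = 2*a^2*B"
    unfolding B_def using jk by (simp add: Suc_diff_le)
  have r: "real (Suc k - j) = real k + 1 - real j" "real (k-j) = real k - real j"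
     "real (2*j+3) = 2*real j + 3" "real (2*k+3) = d3" "real (2*Suc k+3) = d5"
    unfolding d3_def d5_def using jk by (simp_all add: of_nat_diff)
  have U_Suc: "dfact_sum 0 3 a j {j..Suc k} = dfact_sum 0 3 a j {j..k}
      + real (Suc k - j) * (2*a^2)^(Suc k - j) / real (dfact (2*Suc k+3))"
    using jk by (simp add: dfact_sum_def)
  have U: "dfact_sum 0 3 a j {j..k} = 2*a^2*V"
    using dfact_sum_index_shift [OF jk, of a] unfolding V_def by simp
  have U': "dfact_sum 0 3 a j {j..<k} = 2*a^2*V - (real k - real j) * B / (d3*D)"
    using dfact_sum_atLeastAtMost [OF jk, of 0 3 a] jk unfolding U D3 B_def by (simp add: of_nat_diff)
  show ?thesis
    unfolding alpha_odd_eq beta_odd_eq U_Suc idx D3 D5 pow r U U' V_def [symmetric]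
      B_def [symmetric] D_def [symmetric] cjk_def
    using nz apply (simp add: field_simps)
    unfolding d3_def d5_def by algebra
qed

lemma beta_even_diag: "beta_even a k k = a"
proof -
  have "2^k * fk k (a^2) / real (dfact (2*k+1)) * beta_even a k k = 2^k * fk k (a^2) / real (dfact (2*k+1)) * a"
    unfolding scaled_beta_even beta_even_scaled_diag by simp
  then show ?thesis
    by simp
qed

lemma beta_odd_diag: "beta_odd a k k = 1"
proof -
  have "2^k * fk k (a^2) / real (dfact (2*k+1)) * beta_odd a k k = 2^k * fk k (a^2) / real (dfact (2*k+1))"
    unfolding scaled_beta_odd beta_odd_scaled_diag ..
  then show ?thesis
    by simp
qed

lemma alpha_odd_diag: "alpha_odd a k k = 0"
  by (simp add: alpha_odd_eq dfact_sum_def)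

section \<open>The odd identity\<close>

lemma q_pre_odd_pairs:
  "q_pre_odd a k z = (\<Sum>j\<le>k. of_real (beta_even a k j) * z^(2*j) + of_real (beta_odd a k j) * z^(2*j+1))"
proof -
  have "2*k+1 = Suc (2*k)"
    by simp
  then show ?thesis
    unfolding q_pre_odd_def by (simp only: sum.in_pairs_0) simp
qed

definition q_pre_odd_scaled :: "real \<Rightarrow> nat \<Rightarrow> complex \<Rightarrow> complex" where
  "q_pre_odd_scaled a k z =
     (\<Sum>j\<le>k. of_real (beta_even_scaled a k j) * z^(2*j) + of_real (beta_odd_scaled a k j) * z^(2*j+1))"

lemma scaled_q_pre_odd:
  "of_real (2^k * fk k (a^2) / real (dfact (2*k+1))) * q_pre_odd a k z = q_pre_odd_scaled a k z"
  unfolding q_pre_odd_pairs q_pre_odd_scaled_def sum_distrib_left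
    scaled_beta_even [symmetric] scaled_beta_odd [symmetric]
  by (simp add: algebra_simps)

lemma q_pre_odd_scaled_Suc:
  fixes a :: real
  defines "A \<equiv> of_real a :: complex"
  shows "q_pre_odd_scaled a (Suc k) z = q_pre_odd_scaled a k z + of_real (2^k / real (dfact (2*k+3)))
    * (step_sum k z A + 2 * fk (Suc k) (A^2) * (A * z^(2*k+2) + z^(2*k+3)))"
proof -
  let ?r = "(2::real)^k / real (dfact (2*k+3))"
  have lower: "of_real (beta_even_scaled a (Suc k) j) * z^(2*j) + of_real (beta_odd_scaled a (Suc k) j) * z^(2*j+1)
     = (of_real (beta_even_scaled a k j) * z^(2*j) + of_real (beta_odd_scaled a k j) * z^(2*j+1))
       + of_real ?r * ((A^2)^(k-j) * fk j (A^2)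
          * (A*(2*A^2 - 2*of_nat j - 1)*z^(2*j) + (2*A^2 - 2*of_nat j - 3)*z^(2*j+1)))"
    if "j \<in> {..k}" for j
    using that unfolding A_def
    by (simp add: beta_even_scaled_Suc beta_odd_scaled_Suc of_real_fk algebra_simps)
  have idx: "2*Suc k = 2*k+2" "2*k+2+1 = 2*k+3"
    by simp_all
  define D where "D = real (dfact (2*k+3))"
  have diag: "beta_even_scaled a (Suc k) (Suc k) = ?r * (2 * fk (Suc k) (a^2) * a)"
      "beta_odd_scaled a (Suc k) (Suc k) = ?r * (2 * fk (Suc k) (a^2))"
    unfolding D_def [symmetric]
    using beta_even_scaled_diag [of a "Suc k", unfolded idx, folded D_def]
      beta_odd_scaled_diag [of a "Suc k", unfolded idx, folded D_def]
    by simp_all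
  have top: "of_real (beta_even_scaled a (Suc k) (Suc k)) * z^(2*Suc k)
      + of_real (beta_odd_scaled a (Suc k) (Suc k)) * z^(2*Suc k+1)
     = of_real ?r * (2 * fk (Suc k) (A^2) * (A * z^(2*k+2) + z^(2*k+3)))"
    unfolding diag idx A_def by (simp add: of_real_fk algebra_simps)
  have "q_pre_odd_scaled a (Suc k) z
      = (\<Sum>j\<le>k. of_real (beta_even_scaled a (Suc k) j) * z^(2*j) + of_real (beta_odd_scaled a (Suc k) j) * z^(2*j+1))
        + of_real ?r * (2 * fk (Suc k) (A^2) * (A * z^(2*k+2) + z^(2*k+3)))"
    unfolding q_pre_odd_scaled_def sum.atMost_Suc top ..
  also have "(\<Sum>j\<le>k. of_real (beta_even_scaled a (Suc k) j) * z^(2*j) + of_real (beta_odd_scaled a (Suc k) j) * z^(2*j+1))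
      = (\<Sum>j\<le>k. (of_real (beta_even_scaled a k j) * z^(2*j) + of_real (beta_odd_scaled a k j) * z^(2*j+1))
          + of_real ?r * ((A^2)^(k-j) * fk j (A^2)
             * (A*(2*A^2 - 2*of_nat j - 1)*z^(2*j) + (2*A^2 - 2*of_nat j - 3)*z^(2*j+1))))"
    by (rule sum.cong [OF refl lower])
  also have "\<dots> = q_pre_odd_scaled a k z + of_real ?r * step_sum k z A"
    unfolding sum.distrib q_pre_odd_scaled_def step_sum_def sum_distrib_left ..
  finally show ?thesis
    by (simp add: algebra_simps)
qed

lemma cube_mult_odd_increment:
  "(z-A)^3 * (step_sum k z A + 2 * fk (Suc k) (A^2) * (A * z^(2*k+2) + z^(2*k+3)))
    = (z-A)^2 * (2*z^(2*k+4)*fk (k+1) (A^2) - (2*of_nat k+3)*z^(2*k+2)*fk k (A^2))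
      + (of_nat (dfact (2*k+3)) / 2^(k+2)) * A * Lm_step k z A"
  unfolding distrib_left cube_mult_step_sum step_closed_def by (simp add: algebra_simps)

lemma cube_q_pre_odd_scaled:
  "(z - of_real a)^3 * q_pre_odd_scaled a k z
     = (z - of_real a)^2 * z^(2*k+2) * of_real (2^k * fk k (a^2) / real (dfact (2*k+1)))
       + of_real a / 4 * Lm (k+1) z a"
proof (induction k)
  case 0
  have kappa_1: "kappa_g (Suc 0) z w = 2 * (z - w)" for w
    using kappa_g_Suc [of 0 z w] by simp
  have dfact_3: "dfact 3 = 3"
    by (simp add: numeral_eq_Suc)
  show ?case
    by (simp add: q_pre_odd_scaled_def beta_even_scaled_def beta_odd_scaled_def dfact_sum_def Lm_def
        kappa_1 dfact_3 ek_Suc algebra_simps power2_eq_square power3_eq_cube)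
next
  case (Suc k)
  define A where "A = (of_real a :: complex)"
  define Q :: complex where "Q = 2^k"
  define D :: complex where "D = of_nat (dfact (2*k+1))"
  define d3 :: complex where "d3 = 2 * of_nat k + 3"
  define Z where "Z = z^(2*k)"
  define F0 where "F0 = fk k (A^2)"
  define F1 where "F1 = fk (Suc k) (A^2)"
  define incr where "incr = step_sum k z A + 2 * F1 * (A * (z^2*Z) + z^3*Z)"
  have "d3 = of_nat (2*k+3)"
    unfolding d3_def by simp
  then have nz: "Q \<noteq> 0" "D \<noteq> 0" "d3 \<noteq> 0"
    unfolding Q_def D_def by (simp_all only: of_nat_eq_0_iff) simp_all
  have D3: "(of_nat (dfact (2*k+3)) :: complex) = d3 * D"
    unfolding d3_def D_def by (rule of_nat_dfact_odd_Suc)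
  have zpow: "z^(2*k+2) = z^2*Z" "z^(2*k+3) = z^3*Z" "z^(2*k+4) = z^4*Z" "z^(2*Suc k+2) = z^4*Z"
    unfolding Z_def by (simp_all add: power_add numeral_eq_Suc)
  have IH: "(z - A)^3 * q_pre_odd_scaled a k z = (z - A)^2 * (z^2*Z) * (Q * F0 / D) + A / 4 * Lm (Suc k) z a"
    using Suc.IH unfolding A_def Q_def D_def F0_def zpow by (simp add: of_real_fk)
  have step: "q_pre_odd_scaled a (Suc k) z = q_pre_odd_scaled a k z + Q / (d3 * D) * incr"
    unfolding q_pre_odd_scaled_Suc incr_def F1_def A_def D3 [symmetric] Q_def zpow by simp
  have incr: "(z-A)^3 * incr = (z-A)^2*(2*(z^4*Z)*F1 - d3*(z^2*Z)*F0) + (d3 * D / (4*Q)) * A * Lm_step k z A"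
    using cube_mult_odd_increment [of z A k] unfolding incr_def D3 F0_def F1_def zpow d3_def Q_def
    by (simp add: power_add)
  have scale: "of_real (2^Suc k * fk (Suc k) (a^2) / real (dfact (2*Suc k+1))) = 2*Q*F1/(d3*D)"
  proof -
    have idx: "2*Suc k+1 = 2*k+3"
      by simp
    show ?thesis
      unfolding idx D3 [symmetric] Q_def F1_def A_def by (simp add: of_real_fk)
  qed
  have "(z - A)^3 * q_pre_odd_scaled a (Suc k) z
      = (z - A)^3 * q_pre_odd_scaled a k z + Q / (d3 * D) * ((z-A)^3 * incr)"
    unfolding step by (simp add: algebra_simps)
  also have "\<dots> = (z - A)^2 * (z^4*Z) * (2*Q*F1/(d3*D)) + A / 4 * (Lm (Suc k) z a + Lm_step k z A)"
    unfolding IH incr using nz by (simp add: field_simps)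
  finally show ?case
    unfolding A_def scale zpow Lm_Suc_Suc [symmetric] by simp
qed

lemma cube_q_pre_odd:
  "(z - of_real a)^3 * q_pre_odd a k z = (z - of_real a)^2 * z^(2*k+2)
     + of_real (a * real (dfact (2*k+1)) / (2^(k+2) * fk k (a^2))) * Lm (k+1) z a"
proof -
  define c where "c = 2^k * fk k (a^2) / real (dfact (2*k+1))"
  have c: "(of_real c :: complex) \<noteq> 0"
    unfolding c_def by simp
  have "a * real (dfact (2*k+1)) / (2^(k+2) * fk k (a^2)) * c = a / 4"
    unfolding c_def by (simp add: field_simps power_add)
  then have coeff: "of_real (a * real (dfact (2*k+1)) / (2^(k+2) * fk k (a^2))) * of_real c = (of_real a / 4 :: complex)"
    by (metis of_real_mult of_real_divide of_real_numeral)
  have "of_real c * ((z - of_real a)^3 * q_pre_odd a k z)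
      = (z - of_real a)^2 * z^(2*k+2) * of_real c + of_real a / 4 * Lm (k+1) z a"
    using cube_q_pre_odd_scaled [of z a k] unfolding scaled_q_pre_odd [symmetric] c_def
    by (simp add: algebra_simps)
  also have "\<dots> = of_real c * ((z - of_real a)^2 * z^(2*k+2)
      + of_real (a * real (dfact (2*k+1)) / (2^(k+2) * fk k (a^2))) * Lm (k+1) z a)"
    unfolding coeff [symmetric] by (simp add: algebra_simps)
  finally show ?thesis
    using c by simp
qed

section \<open>The even identity\<close>

lemma isCont_eq_if_eq_off_point:
  fixes f :: "'a::{perfect_space,t2_space} \<Rightarrow> 'b::t2_space"
  assumes "isCont f x" and "\<And>y. y \<noteq> x \<Longrightarrow> f y = c"
  shows "f x = c"
proof -
  have "\<forall>\<^sub>F y in at x. f y = c"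
    using assms(2) by (simp add: eventually_at_filter)
  then have "(f \<longlongrightarrow> c) (at x)"
    by (rule tendsto_eventually)
  with assms(1) show ?thesis
    unfolding isCont_def using tendsto_unique [OF at_neq_bot] by blast
qed

lemma q_pre_even_pairs:
  "q_pre_even a k z = (\<Sum>j\<le>k. of_real (alpha_even a k j) * z^(2*j) + of_real (alpha_odd a k j) * z^(2*j+1))"
proof -
  define f where "f i = of_real (if even i then alpha_even a k (i div 2) else alpha_odd a k (i div 2)) * z^i" for i
  have "(\<Sum>i\<le>Suc (2*k). f i) = (\<Sum>i\<le>2*k. f i) + f (Suc (2*k))"
    by (rule sum.atMost_Suc)
  moreover have "f (Suc (2*k)) = 0"
    unfolding f_def by (simp add: alpha_odd_diag)
  ultimately have "q_pre_even a k z = (\<Sum>i\<le>Suc (2*k). f i)"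
    unfolding q_pre_even_def f_def by simp
  then show ?thesis
    unfolding sum.in_pairs_0 f_def by simp
qed

lemma q_pre_even_via_odd:
  "of_real (a * fk k (a^2)) * q_pre_even a k z
    = of_real (fk (Suc k) (a^2)) * (q_pre_odd a (Suc k) z - z^(2*k+3) - of_real a * z^(2*k+2))
      - of_real (a^2 * fk k (a^2)) * q_pre_odd a k z"
proof -
  let ?F0 = "fk k (a^2)" and ?F1 = "fk (Suc k) (a^2)"
  have idx: "2*Suc k = 2*k+2" "2*k+2+1 = 2*k+3"
    by simp_all
  have top: "q_pre_odd a (Suc k) z - z^(2*k+3) - of_real a * z^(2*k+2)
     = (\<Sum>j\<le>k. of_real (beta_even a (Suc k) j) * z^(2*j) + of_real (beta_odd a (Suc k) j) * z^(2*j+1))"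
    unfolding q_pre_odd_pairs [of a "Suc k"] sum.atMost_Suc beta_even_diag beta_odd_diag idx by simp
  have pair: "of_real (a * ?F0) * (of_real (alpha_even a k j) * z^(2*j) + of_real (alpha_odd a k j) * z^(2*j+1))
     = of_real ?F1 * (of_real (beta_even a (Suc k) j) * z^(2*j) + of_real (beta_odd a (Suc k) j) * z^(2*j+1))
       - of_real (a^2 * ?F0) * (of_real (beta_even a k j) * z^(2*j) + of_real (beta_odd a k j) * z^(2*j+1))"
    if "j \<in> {..k}" for j
  proof -
    have "of_real (a * ?F0) * (of_real (alpha_even a k j) * z^(2*j) + of_real (alpha_odd a k j) * z^(2*j+1))
       = of_real (a * ?F0 * alpha_even a k j) * z^(2*j) + of_real (a * ?F0 * alpha_odd a k j) * z^(2*j+1)"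
      by (simp add: algebra_simps)
    also have "\<dots> = of_real (?F1 * beta_even a (Suc k) j - a^2 * ?F0 * beta_even a k j) * z^(2*j)
       + of_real (?F1 * beta_odd a (Suc k) j - a^2 * ?F0 * beta_odd a k j) * z^(2*j+1)"
      using that by (simp only: alpha_even_recurrence alpha_odd_recurrence atMost_iff)
    finally show ?thesis
      by (simp add: algebra_simps)
  qed
  show ?thesis
    unfolding top q_pre_even_pairs q_pre_odd_pairs [of a k] sum_distrib_left sum_subtractf [symmetric]
    by (rule sum.cong [OF refl pair])
qed

lemma combine_cube_identities:
  fixes A z Zp qe qo0 qo1 L1 L2 F0 F1 e1 D D3 Q :: "'a::field"
  assumes nz: "F0 \<noteq> 0" "A \<noteq> 0" "Q \<noteq> 0" "F1 \<noteq> 0" and F1: "F1 = F0 + e1"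
    and rel: "A*F0*qe = F1*(qo1 - z*Zp - A*Zp) - A^2*F0*qo0"
    and o0: "(z-A)^3*qo0 = (z-A)^2*Zp + A*D/(4*Q*F0) * L1"
    and o1: "(z-A)^3*qo1 = (z-A)^2*(z^2*Zp) + A*D3/(8*Q*F1) * L2"
  shows "(z-A)^3*qe = A*(z-A)^2*(e1/F0)*Zp + D3/(8*Q*F0)*L2 - A^2*D/(4*Q*F0)*L1"
proof -
  have "A*F0*((z-A)^3*qe) = (z-A)^3 * (A*F0*qe)"
    by (simp add: algebra_simps)
  also have "\<dots> = F1*((z-A)^3*qo1) - F1*(z-A)^3*(z*Zp + A*Zp) - A^2*F0*((z-A)^3*qo0)"
    unfolding rel by (simp add: algebra_simps)
  also have "\<dots> = A*F0*(A*(z-A)^2*(e1/F0)*Zp + D3/(8*Q*F0)*L2 - A^2*D/(4*Q*F0)*L1)"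
    unfolding o0 o1 using nz apply (simp add: field_simps)
    using F1 by algebra
  finally show ?thesis
    using nz by simp
qed

lemma cube_q_pre_even_nonzero:
  assumes "a \<noteq> 0"
  shows "(z - of_real a)^3 * q_pre_even a k z =
           of_real a * (z - of_real a)^2 * of_real (ek (k+1) (a^2) / fk k (a^2)) * z^(2*k+2)
         + of_real (real (dfact (2*k+3)) / (2^(k+3) * fk k (a^2))) * Lm (k+2) z a
         - of_real (a^2 * real (dfact (2*k+1)) / (2^(k+2) * fk k (a^2))) * Lm (k+1) z a"
proof -
  let ?A = "of_real a :: complex"
  let ?F0 = "of_real (fk k (a^2)) :: complex"
  let ?F1 = "of_real (fk (Suc k) (a^2)) :: complex"
  let ?e1 = "of_real (ek (Suc k) (a^2)) :: complex"
  let ?D = "of_nat (dfact (2*k+1)) :: complex"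
  let ?D3 = "of_nat (dfact (2*k+3)) :: complex"
  let ?Q = "2^k :: complex"
  have nz: "?F0 \<noteq> 0" "?A \<noteq> 0" "?Q \<noteq> 0" "?F1 \<noteq> 0"
    using assms by simp_all
  have F1: "?F1 = ?F0 + ?e1"
    unfolding fk_Suc by simp
  have idx: "2*Suc k+1 = 2*k+3" "Suc k + 1 = k+2"
    by simp_all
  have pow: "z^(2*k+3) = z * z^(2*k+2)" "z^(2*Suc k+2) = z^2 * z^(2*k+2)"
    by (simp_all add: power_add power2_eq_square power3_eq_cube mult_ac)
  have rel: "?A * ?F0 * q_pre_even a k z
      = ?F1 * (q_pre_odd a (Suc k) z - z * z^(2*k+2) - ?A * z^(2*k+2)) - ?A^2 * ?F0 * q_pre_odd a k z"
    using q_pre_even_via_odd [of a k z] unfolding pow by simp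
  have o0: "(z - ?A)^3 * q_pre_odd a k z = (z - ?A)^2 * z^(2*k+2) + ?A * ?D / (4 * ?Q * ?F0) * Lm (k+1) z a"
    using cube_q_pre_odd [of z a k] by (simp add: power_add)
  have o1: "(z - ?A)^3 * q_pre_odd a (Suc k) z
      = (z - ?A)^2 * (z^2 * z^(2*k+2)) + ?A * ?D3 / (8 * ?Q * ?F1) * Lm (k+2) z a"
    using cube_q_pre_odd [of z a "Suc k"] unfolding idx pow by (simp add: power_add)
  show ?thesis
    using combine_cube_identities [OF nz F1 rel o0 o1] by (simp add: power_add)
qed

lemma cube_q_pre_even:
  "(z - of_real a)^3 * q_pre_even a k z =
       of_real a * (z - of_real a)^2 * of_real (ek (k+1) (a^2) / fk k (a^2)) * z^(2*k+2)
     + of_real (real (dfact (2*k+3)) / (2^(k+3) * fk k (a^2))) * Lm (k+2) z a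
     - of_real (a^2 * real (dfact (2*k+1)) / (2^(k+2) * fk k (a^2))) * Lm (k+1) z a"
proof -
  define g where "g b = (z - of_real b)^3 * q_pre_even b k z -
     (of_real b * (z - of_real b)^2 * of_real (ek (k+1) (b^2) / fk k (b^2)) * z^(2*k+2)
     + of_real (real (dfact (2*k+3)) / (2^(k+3) * fk k (b^2))) * Lm (k+2) z b
     - of_real (b^2 * real (dfact (2*k+1)) / (2^(k+2) * fk k (b^2))) * Lm (k+1) z b)" for b
  have off_0: "g b = 0" if "b \<noteq> 0" for b
    unfolding g_def using cube_q_pre_even_nonzero [OF that] by simp
  have "fk k 0 \<noteq> (0::real)"
    using fk_pos [of 0 k] by simp
  then have "isCont g 0"
    unfolding g_def q_pre_even_pairs alpha_even_eq alpha_odd_eq cjk_def dfact_sum_def Lm_def kappa_g_def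
    by (intro continuous_intros) simp_all
  then have "g 0 = 0"
    using off_0 by (rule isCont_eq_if_eq_off_point)
  then have "g a = 0"
    using off_0 by (cases "a = 0") simp_all
  then show ?thesis
    unfolding g_def by simp
qed

theorem lemma4p2:
  fixes a :: real and k :: nat and z :: complex
  shows "((z - of_real a)^3 * q_pre_odd a k z =
           (z - of_real a)^2 * z^(2*k+2)
         + of_real (a * real (dfact (2*k+1)) / (2^(k+2) * fk k (a^2))) * Lm (k+1) z a)
    \<and> ((z - of_real a)^3 * q_pre_even a k z =
           of_real a * (z - of_real a)^2 * of_real (ek (k+1) (a^2) / fk k (a^2)) * z^(2*k+2)
         + of_real (real (dfact (2*k+3)) / (2^(k+3) * fk k (a^2))) * Lm (k+2) z a
         - of_real (a^2 * real (dfact (2*k+1)) / (2^(k+2) * fk k (a^2))) * Lm (k+1) z a)"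
  using cube_q_pre_odd cube_q_pre_even by blast

end
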